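(* Let $(M,d)$ be a metric space, $\mathsf{P}\subseteq M$ a set of $n$ points, $1\le \ell\le k\le n$ integers, $m=\lfloor k/\ell\rfloor$, and $c\ge1$. Let $Q=\{q_1,\dots,q_m\}\subseteq\mathsf{P}$ satisfy $\sum_{p\in\mathsf{P}} d_Q(p,1)\le c\,\sigma_{\mathrm{med}}$, where $\sigma_{\mathrm{med}}=\min_{S\subseteq\mathsf{P},|S|=m}\sum_{p\in\mathsf{P}} d_S(p,1)$. Let $C\subseteq\mathsf{P}$ with $|C|=k$ and $C\supseteq\bigcup_{i=1}^m N_{\mathsf{P}}(q_i,\ell)$, and let $\sigma_{\mathrm{alg}}=\sum_{p\in\mathsf{P}} d_C(p,\ell)$ and $\sigma_{\mathrm{opt}}=\min_{C'\subseteq\mathsf{P},|C'|=k}\sum_{p\in\mathsf{P}} d_{C'}(p,\ell)$. Then $\sigma_{\mathrm{alg}}\le \sigma_{\mathrm{opt}}+2c\,\sigma_{\mathrm{med}}$.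
   Context: For a finite set $S\subseteq M$, a point $p\in M$ and an integer $1\le i\le |S|$, $d_S(p,i)$ denotes the radius of the smallest closed ball centered at $p$ containing at least $i$ points of $S$. The $i$ nearest neighbors of $p$ in $S$ are determined by ordering $s\in S$ lexicographically by $(d(p,s),\text{index of }s)$; $N_S(p,i)$ is the set of the first $i$ points in this order, so $|N_S(p,i)|=i$. *)

theory Defs
  imports "HOL-Analysis.Analysis"
begin

definition kdist :: "'a::metric_space set \<Rightarrow> 'a \<Rightarrow> nat \<Rightarrow> real" where
  "kdist S p i = Inf {r::real. 0 \<le> r \<and> i \<le> card {s \<in> S. dist p s \<le> r}}"

text \<open>N_S(p,i): the first i points of S in the lexicographic order on (d(p,s), index of s),
  where idx is the (injective) indexing of the points.\<close>
definition knn :: "('a \<Rightarrow> nat) \<Rightarrow> 'a::metric_space set \<Rightarrow> 'a \<Rightarrow> nat \<Rightarrow> 'a set" where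
  "knn idx S p i = {s \<in> S. card {t \<in> S. dist p t < dist p s \<or> (dist p t = dist p s \<and> idx t < idx s)} < i}"

end

theory Submission
  imports Defs
begin

text \<open>For a point p, pick a nearest centre q in Q.  The l nearest neighbours of q in P lie in C and
  within distance d_P(q,l) of q, so d_C(p,l) \<le> d(p,q) + d_P(q,l).  The function d_P(\<cdot>,l) is
  1-Lipschitz, hence d_P(q,l) \<le> d(p,q) + d_P(p,l), and d_P(p,l) \<le> d_C'(p,l) for every C' \<subseteq> P.
  Altogether d_C(p,l) \<le> 2 d_Q(p,1) + d_C'(p,l); summing over p with C' optimal gives the bound.\<close>

lemma kdist_le:
  assumes "0 \<le> r" "i \<le> card {s\<in>S. dist p s \<le> r}"
  shows "kdist S p i \<le> r"
  unfolding kdist_def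
  by (rule cInf_lower) (use assms in \<open>auto intro: bdd_belowI[where m=0]\<close>)

lemma closed_ball_radius_in_distances:
  assumes "finite S" "0 \<le> x"
  obtains r where "r \<in> insert 0 (dist p ` S)" "r \<le> x"
    and "{s\<in>S. dist p s \<le> r} = {s\<in>S. dist p s \<le> x}"
proof
  let ?R = "insert 0 (dist p ` {s\<in>S. dist p s \<le> x})"
  have fin: "finite ?R" using assms(1) by simp
  show "Max ?R \<in> insert 0 (dist p ` S)" using Max_in[OF fin] by auto
  show "Max ?R \<le> x" using fin assms(2) by simp
  show "{s\<in>S. dist p s \<le> Max ?R} = {s\<in>S. dist p s \<le> x}"
  proof (intro subset_antisym subsetI)
    fix s assume "s \<in> {s\<in>S. dist p s \<le> Max ?R}"
    thus "s \<in> {s\<in>S. dist p s \<le> x}" using \<open>Max ?R \<le> x\<close> by simp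
  next
    fix s assume "s \<in> {s\<in>S. dist p s \<le> x}"
    thus "s \<in> {s\<in>S. dist p s \<le> Max ?R}" using fin by (simp add: Max_ge)
  qed
qed

text \<open>The infimum defining kdist is a minimum, taken at one of the finitely many radii 0, d(p,s).\<close>
lemma kdist_attained:
  assumes "finite S" "i \<le> card S"
  shows "0 \<le> kdist S p i" and "i \<le> card {s\<in>S. dist p s \<le> kdist S p i}"
proof -
  define D where "D = {r \<in> insert 0 (dist p ` S). i \<le> card {s\<in>S. dist p s \<le> r}}"
  have finD: "finite D" using assms(1) by (simp add: D_def)
  let ?r = "Max (insert 0 (dist p ` S))"
  have "?r \<in> insert 0 (dist p ` S)" using assms(1) by (intro Max_in) auto
  moreover have "dist p s \<le> ?r" if "s \<in> S" for s using assms(1) that by (simp add: Max_ge)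
  hence "{s\<in>S. dist p s \<le> ?r} = S" by blast
  ultimately have "?r \<in> D" using assms(2) by (simp add: D_def)
  hence "D \<noteq> {}" by blast
  have D_nonneg: "0 \<le> r" if "r \<in> D" for r using that by (auto simp: D_def)
  have "Min D \<in> D" using finD \<open>D \<noteq> {}\<close> by (rule Min_in)
  have "kdist S p i = Min D"
    unfolding kdist_def
  proof (rule cInf_eq_minimum)
    show "Min D \<in> {r. 0 \<le> r \<and> i \<le> card {s \<in> S. dist p s \<le> r}}"
      using \<open>Min D \<in> D\<close> D_nonneg[OF \<open>Min D \<in> D\<close>] by (simp add: D_def)
  next
    fix x assume x: "x \<in> {r. 0 \<le> r \<and> i \<le> card {s \<in> S. dist p s \<le> r}}"
    then obtain r where "r \<in> insert 0 (dist p ` S)" "r \<le> x"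
      and "{s\<in>S. dist p s \<le> r} = {s\<in>S. dist p s \<le> x}"
      using closed_ball_radius_in_distances[OF assms(1)] by blast
    hence "r \<in> D" using x by (simp add: D_def)
    with finD have "Min D \<le> r" by (rule Min_le)
    thus "Min D \<le> x" using \<open>r \<le> x\<close> by linarith
  qed
  thus "0 \<le> kdist S p i" "i \<le> card {s\<in>S. dist p s \<le> kdist S p i}"
    using \<open>Min D \<in> D\<close> D_nonneg[OF \<open>Min D \<in> D\<close>] by (simp_all add: D_def)
qed

lemma kdist_antimono:
  assumes "S \<subseteq> T" "finite T" "i \<le> card S"
  shows "kdist T p i \<le> kdist S p i"
proof (rule kdist_le)
  have "finite S" using assms(1,2) finite_subset by blast
  note S = kdist_attained[OF this assms(3), of p]
  show "0 \<le> kdist S p i" by (rule S(1))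
  have "card {s\<in>S. dist p s \<le> kdist S p i} \<le> card {s\<in>T. dist p s \<le> kdist S p i}"
    using assms(1,2) by (intro card_mono) auto
  thus "i \<le> card {s\<in>T. dist p s \<le> kdist S p i}" using S(2) by linarith
qed

lemma kdist_le_dist_plus_kdist:
  assumes "finite S" "i \<le> card S"
  shows "kdist S q i \<le> dist p q + kdist S p i"
proof (rule kdist_le)
  note p = kdist_attained[OF assms, of p]
  show "0 \<le> dist p q + kdist S p i" using p(1) by simp
  have "{s\<in>S. dist p s \<le> kdist S p i} \<subseteq> {s\<in>S. dist q s \<le> dist p q + kdist S p i}"
  proof clarify
    fix s assume "s \<in> S" "dist p s \<le> kdist S p i"
    thus "dist q s \<le> dist p q + kdist S p i"
      using dist_triangle[of q s p] by (simp add: dist_commute)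
  qed
  hence "card {s\<in>S. dist p s \<le> kdist S p i} \<le> card {s\<in>S. dist q s \<le> dist p q + kdist S p i}"
    using assms(1) by (intro card_mono) auto
  thus "i \<le> card {s\<in>S. dist q s \<le> dist p q + kdist S p i}" using p(2) by linarith
qed

text \<open>The rank of s is the number of points preceding it in the (distance, index) order; it is a
  bijection from P onto {..<card P}, and knn is the set of points of rank below l.\<close>
lemma card_knn:
  assumes fin: "finite P" and inj: "inj_on idx P" and "l \<le> card P"
  shows "card (knn idx P q l) = l"
proof -
  define before where
    "before = (\<lambda>t s. dist q t < dist q s \<or> (dist q t = dist q s \<and> idx t < idx s))"
  define rank where "rank = (\<lambda>s. card {t\<in>P. before t s})"
  have knn_eq: "knn idx P q l = {s\<in>P. rank s < l}"
    by (simp add: knn_def rank_def before_def)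
  have rank_less: "rank s < rank s'" if "s \<in> P" "before s s'" for s s'
  proof -
    have "insert s {t\<in>P. before t s} \<subseteq> {t\<in>P. before t s'}"
      using that by (auto simp: before_def)
    moreover have "s \<notin> {t\<in>P. before t s}" by (simp add: before_def)
    ultimately have "Suc (rank s) \<le> rank s'"
      using fin unfolding rank_def by (metis (no_types, lifting) card_insert_disjoint
          card_mono finite_subset mem_Collect_eq subsetI)
    thus ?thesis by simp
  qed
  have before_total: "before s s' \<or> before s' s" if "s \<in> P" "s' \<in> P" "s \<noteq> s'" for s s'
  proof -
    have "idx s \<noteq> idx s'" using inj that by (auto dest: inj_onD)
    thus ?thesis by (auto simp: before_def)
  qed
  have "inj_on rank P"
    by (rule inj_onI, rule ccontr) (metis before_total rank_less less_irrefl)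
  moreover have "rank ` P \<subseteq> {..<card P}"
  proof clarify
    fix s assume "s \<in> P"
    have "rank s \<le> card (P - {s})"
      unfolding rank_def using fin by (intro card_mono) (auto simp: before_def)
    thus "rank s < card P" using fin \<open>s \<in> P\<close> by (metis card_Diff1_less order_le_less_trans)
  qed
  ultimately have "rank ` P = {..<card P}"
    using card_image by (intro card_subset_eq) auto
  hence "rank ` {s\<in>P. rank s < l} = {..<l}" using assms(3) by auto
  moreover have "inj_on rank {s\<in>P. rank s < l}"
    using \<open>inj_on rank P\<close> by (rule inj_on_subset) auto
  ultimately show ?thesis using knn_eq card_image by (metis card_lessThan)
qed

lemma dist_le_kdist_if_mem_knn:
  assumes "finite P" "l \<le> card P" "s \<in> knn idx P q l"
  shows "dist q s \<le> kdist P q l"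
proof (rule ccontr)
  assume far: "\<not> dist q s \<le> kdist P q l"
  have "l \<le> card {t\<in>P. dist q t \<le> kdist P q l}" using kdist_attained[OF assms(1,2)] by blast
  also have "\<dots> \<le> card {t\<in>P. dist q t < dist q s \<or> (dist q t = dist q s \<and> idx t < idx s)}"
    using assms(1) far by (intro card_mono) auto
  finally show False using assms(3) by (simp add: knn_def)
qed

lemma kdist_le_if_knn_subset:
  assumes "finite P" "inj_on idx P" "l \<le> card P" "C \<subseteq> P" "knn idx P q l \<subseteq> C"
  shows "kdist C p l \<le> dist p q + kdist P q l"
proof (rule kdist_le)
  show "0 \<le> dist p q + kdist P q l" using kdist_attained(1)[OF assms(1,3)] by simp
  have "knn idx P q l \<subseteq> {s\<in>C. dist p s \<le> dist p q + kdist P q l}"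
  proof
    fix s assume s: "s \<in> knn idx P q l"
    have "dist p s \<le> dist p q + dist q s" by (rule dist_triangle)
    also have "\<dots> \<le> dist p q + kdist P q l" using dist_le_kdist_if_mem_knn[OF assms(1,3) s] by simp
    finally show "s \<in> {s\<in>C. dist p s \<le> dist p q + kdist P q l}" using s assms(5) by auto
  qed
  hence "card (knn idx P q l) \<le> card {s\<in>C. dist p s \<le> dist p q + kdist P q l}"
    using finite_subset[OF assms(4,1)] by (intro card_mono) auto
  thus "l \<le> card {s\<in>C. dist p s \<le> dist p q + kdist P q l}"
    using card_knn[OF assms(1-3)] by simp
qed

lemma kdist_le_via_center:
  assumes "finite P" "inj_on idx P" "l \<le> card P" "C \<subseteq> P" "knn idx P q l \<subseteq> C"
    and "C' \<subseteq> P" "l \<le> card C'"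
  shows "kdist C p l \<le> 2 * dist p q + kdist C' p l"
  using kdist_le_if_knn_subset[OF assms(1-5), of p]
    kdist_le_dist_plus_kdist[OF assms(1,3), of q p]
    kdist_antimono[OF assms(6,1,7), of p]
  by linarith

lemma nearest_point_within_kdist_1:
  assumes "finite Q" "Q \<noteq> {}"
  obtains q where "q \<in> Q" "dist p q \<le> kdist Q p 1"
proof -
  have "1 \<le> card Q" using assms by (simp add: Suc_leI card_gt_0_iff)
  hence "card {s\<in>Q. dist p s \<le> kdist Q p 1} \<noteq> 0"
    using kdist_attained(2)[OF assms(1), of 1 p] by linarith
  then obtain q where "q \<in> Q" "dist p q \<le> kdist Q p 1"
    by (metis (mono_tags, lifting) card.empty empty_Collect_eq)
  thus thesis by (rule that)
qed

lemma Min_over_subsets_attained: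
  fixes f :: "'a set \<Rightarrow> 'b::linorder"
  assumes "finite P" "k \<le> card P"
  obtains C where "C \<subseteq> P" "card C = k" "Min {f C | C. C \<subseteq> P \<and> card C = k} = f C"
proof -
  let ?A = "{f C | C. C \<subseteq> P \<and> card C = k}"
  have "?A \<subseteq> f ` Pow P" by blast
  hence "finite ?A" using assms(1) by (simp add: finite_subset)
  moreover obtain C0 where "C0 \<subseteq> P" "card C0 = k"
    using obtain_subset_with_card_n[OF assms(2)] by metis
  hence "?A \<noteq> {}" by blast
  ultimately have "Min ?A \<in> ?A" by (rule Min_in)
  then obtain C where "C \<subseteq> P" "card C = k" "Min ?A = f C" by blast
  thus thesis by (rule that)
qed

theorem claim1:
  fixes P Q C :: "'a::metric_space set" and idx :: "'a \<Rightarrow> nat"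
    and n k l m :: nat and c :: real
  assumes "finite P" and "card P = n" and "inj_on idx P"
    and "1 \<le> l" and "l \<le> k" and "k \<le> n"
    and "m = k div l" and "1 \<le> c"
    and "Q \<subseteq> P" and "card Q = m"
    and "(\<Sum>p\<in>P. kdist Q p 1) \<le> c * Min {(\<Sum>p\<in>P. kdist S p 1) | S. S \<subseteq> P \<and> card S = m}"
    and "C \<subseteq> P" and "card C = k" and "(\<Union>q\<in>Q. knn idx P q l) \<subseteq> C"
  shows "(\<Sum>p\<in>P. kdist C p l) \<le>
           Min {(\<Sum>p\<in>P. kdist C' p l) | C'. C' \<subseteq> P \<and> card C' = k}
           + 2 * c * Min {(\<Sum>p\<in>P. kdist S p 1) | S. S \<subseteq> P \<and> card S = m}"
proof -
  have "0 < m" using assms(4,5,7) by (simp add: div_greater_zero_iff)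
  hence "Q \<noteq> {}" using assms(10) by auto
  have "finite Q" using assms(1,9) by (rule finite_subset[rotated])
  have "k \<le> card P" using assms(2,6) by simp
  then obtain C' where C': "C' \<subseteq> P" "card C' = k"
    "Min {(\<Sum>p\<in>P. kdist C' p l) | C'. C' \<subseteq> P \<and> card C' = k} = (\<Sum>p\<in>P. kdist C' p l)"
    by (rule Min_over_subsets_attained[OF assms(1)])
  have "l \<le> card P" "l \<le> card C'" using assms(2,5,6) C'(2) by simp_all
  have "kdist C p l \<le> 2 * kdist Q p 1 + kdist C' p l" for p
  proof -
    obtain q where "q \<in> Q" "dist p q \<le> kdist Q p 1"
      by (rule nearest_point_within_kdist_1[OF \<open>finite Q\<close> \<open>Q \<noteq> {}\<close>])
    moreover have "knn idx P q l \<subseteq> C" using \<open>q \<in> Q\<close> assms(14) by blast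
    ultimately show ?thesis
      using kdist_le_via_center[OF assms(1,3) \<open>l \<le> card P\<close> assms(12) _ C'(1) \<open>l \<le> card C'\<close>]
      by (smt (verit))
  qed
  hence "(\<Sum>p\<in>P. kdist C p l) \<le> (\<Sum>p\<in>P. 2 * kdist Q p 1 + kdist C' p l)"
    by (rule sum_mono)
  also have "\<dots> = 2 * (\<Sum>p\<in>P. kdist Q p 1) + (\<Sum>p\<in>P. kdist C' p l)"
    by (simp add: sum.distrib sum_distrib_left)
  finally show ?thesis using assms(11) C'(3) by linarith
qed

end
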